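(* Let $(M,\circ,e)$ be a semi-simple holomorphic $F$-manifold with canonical coordinates $(u^1,\dots,u^n)$, so that $\partial_{u^i}\circ\partial_{u^j}=\delta_{ij}\partial_{u^j}$. Suppose the hermitian metric $\tilde h$ and the real structure $\tilde k$ on $T^{1,0}M$ are diagonal: $$\tilde h(\partial_{u^i},\partial_{u^j})=H_{ii}\delta_{ij},\qquad \tilde k(\partial_{u^i})=k_i\partial_{u^i},$$ with $H_{ii}>0$ and $|k_i|=1$, and with $\tilde k$ extended antilinearly. Then every eventual identity $\mathcal E$ of $(M,\circ,e)$ satisfies, for all sections $X,Y,Z$ of $T^{1,0}M$, $$\tilde D_X(\mathcal E\circ Y\circ Z)-\tilde D_Y(\mathcal E\circ X\circ Z)=\mathcal E\circ\big(\tilde D_X(Y\circ Z)-\tilde D_Y(X\circ Z)\big)$$ and $$[\tilde C_X,\tilde k\tilde C_Y\tilde k]=[\tilde C_{\mathcal E^{-1}\circ X},\tilde k\tilde C_{\mathcal E^{-1}\circ Y}\tilde k].$$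
   Context: A holomorphic $F$-manifold is a commutative, associative multiplication $\circ$ with unit $e$ on holomorphic vector fields of a complex manifold $M$ (extended to $T^{1,0}M$) satisfying $$L_{X\circ Y}(\circ)=X\circ L_Y(\circ)+Y\circ L_X(\circ),$$ where $$L_Z(\circ)(X,Y):=[Z,X\circ Y]-[Z,X]\circ Y-X\circ[Z,Y].$$ An eventual identity is a holomorphic vector field $\mathcal E$ with $\circ$-inverse $\mathcal E^{-1}$ such that $X\circ Y\circ\mathcal E^{-1}$ is again an $F$-manifold multiplication. $\tilde D$ is the Chern connection of $(T^{1,0}M,\tilde h)$, and $\tilde C_XY:=X\circ Y$. *)

theory Defs
  imports "HOL-Analysis.Analysis"
begin

text \<open>Local model: the coordinate domain U of canonical coordinates u = (u^1..u^n) is an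
open subset of complex^'n.  A (1,0) vector field / section X of T^{1,0}M is represented by its
component function x |-> (X^1(x),...,X^n(x)) w.r.t. the frame d/du^i.\<close>

type_synonym ('n) vf = "complex^('n::finite) \<Rightarrow> complex^'n"

type_synonym ('n) pmult = "complex^('n::finite) \<Rightarrow> complex^'n \<Rightarrow> complex^'n \<Rightarrow> complex^'n"

definition holo_field :: "(complex^'n::finite) set \<Rightarrow> 'n vf \<Rightarrow> bool" where
  "holo_field U X \<longleftrightarrow> (\<forall>x\<in>U. \<exists>D. (X has_derivative D) (at x) \<and>
                          (\<forall>(c::complex) v. D (c *s v) = c *s D v))"

definition lie :: "('n::finite) vf \<Rightarrow> 'n vf \<Rightarrow> 'n vf" where
  "lie X Y x = frechet_derivative Y (at x) (X x) - frechet_derivative X (at x) (Y x)"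

definition prodf :: "('n::finite) pmult \<Rightarrow> 'n vf \<Rightarrow> 'n vf \<Rightarrow> 'n vf" where
  "prodf m X Y = (\<lambda>x. m x (X x) (Y x))"

definition lieD :: "('n::finite) pmult \<Rightarrow> 'n vf \<Rightarrow> 'n vf \<Rightarrow> 'n vf \<Rightarrow> 'n vf" where
  "lieD m Z X Y = (\<lambda>x. lie Z (prodf m X Y) x - m x (lie Z X x) (Y x) - m x (X x) (lie Z Y x))"

definition F_mult :: "(complex^'n) set \<Rightarrow> 'n pmult \<Rightarrow> 'n vf \<Rightarrow> bool" where
  "F_mult U m e \<longleftrightarrow>
     (\<forall>x\<in>U. \<forall>(a::complex) b v v' w. m x (a *s v + b *s v') w = a *s m x v w + b *s m x v' w) \<and>
     (\<forall>x\<in>U. \<forall>v w. m x v w = m x w v) \<and>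
     (\<forall>x\<in>U. \<forall>u v w. m x (m x u v) w = m x u (m x v w)) \<and>
     holo_field U e \<and> (\<forall>x\<in>U. \<forall>v. m x (e x) v = v) \<and>
     (\<forall>X Y. holo_field U X \<longrightarrow> holo_field U Y \<longrightarrow> holo_field U (prodf m X Y)) \<and>
     (\<forall>X Y Z W. holo_field U X \<longrightarrow> holo_field U Y \<longrightarrow> holo_field U Z \<longrightarrow> holo_field U W \<longrightarrow>
        (\<forall>x\<in>U. lieD m (prodf m X Y) Z W x
                 = m x (X x) (lieD m Y Z W x) + m x (Y x) (lieD m X Z W x)))"

definition eventual_identity :: "(complex^'n) set \<Rightarrow> 'n pmult \<Rightarrow> 'n vf \<Rightarrow> 'n vf \<Rightarrow> 'n vf \<Rightarrow> bool" where
  "eventual_identity U m e E Einv \<longleftrightarrow>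
     holo_field U E \<and> (\<forall>x\<in>U. m x (E x) (Einv x) = e x) \<and>
     F_mult U (\<lambda>x v w. m x (m x v w) (Einv x)) E"

text \<open>Semisimple multiplication in canonical coordinates: d_i o d_j = delta_ij d_j, unit e = sum d_i.\<close>
definition cmult :: "('n::finite) pmult" where
  "cmult x v w = (\<chi> i. v $ i * w $ i)"

definition cunit :: "('n::finite) vf" where
  "cunit x = (\<chi> i. 1)"

definition wirt :: "'n::finite \<Rightarrow> (complex^'n \<Rightarrow> complex) \<Rightarrow> complex^'n \<Rightarrow> complex" where
  "wirt j f x = (frechet_derivative f (at x) (axis j 1)
                 - \<i> * frechet_derivative f (at x) (axis j \<i>)) / 2"

definition dirder :: "complex^'n::finite \<Rightarrow> 'n vf \<Rightarrow> (complex^'n \<Rightarrow> complex) \<Rightarrow> complex" where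
  "dirder x X f = (\<Sum>j\<in>UNIV. X x $ j * wirt j f x)"

text \<open>Chern connection of the hermitian metric with matrix H(x)_{ab} = h(d_a, d_b) in the
  holomorphic frame d_a: D s_a = sum_c theta_a^c s_c with theta_a^c = sum_b dH_{ab} (H^{-1})_{bc}.\<close>
definition chern :: "(complex^'n::finite \<Rightarrow> complex^'n^'n) \<Rightarrow> 'n vf \<Rightarrow> 'n vf \<Rightarrow> 'n vf" where
  "chern H X Y x = (\<chi> c. dirder x X (\<lambda>y. Y y $ c)
      + (\<Sum>a\<in>UNIV. \<Sum>b\<in>UNIV. Y x $ a * dirder x X (\<lambda>y. H y $ a $ b) * matrix_inv (H x) $ b $ c))"

definition diag_metric :: "(complex^'n::finite \<Rightarrow> 'n \<Rightarrow> real) \<Rightarrow> complex^'n \<Rightarrow> complex^'n^'n" where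
  "diag_metric Hd x = (\<chi> a b. if a = b then complex_of_real (Hd x a) else 0)"

definition ktil :: "(complex^'n::finite \<Rightarrow> 'n \<Rightarrow> complex) \<Rightarrow> complex^'n \<Rightarrow> complex^'n \<Rightarrow> complex^'n" where
  "ktil kd x v = (\<chi> i. kd x i * cnj (v $ i))"

definition Cop :: "('n::finite) pmult \<Rightarrow> 'n vf \<Rightarrow> complex^'n \<Rightarrow> complex^'n \<Rightarrow> complex^'n" where
  "Cop m X x v = m x (X x) v"

definition commut :: "('a::ab_group_add \<Rightarrow> 'a) \<Rightarrow> ('a \<Rightarrow> 'a) \<Rightarrow> 'a \<Rightarrow> 'a" where
  "commut A B = (\<lambda>v. A (B v) - B (A v))"

end

theory Submission
  imports Defs
begin

(* In canonical coordinates the multiplication is componentwise, the metric is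
   diagonal and the real structure is diagonal, so both identities reduce to statements about
   single components.
   (1) The Chern connection of the diagonal metric H = diag(H_1,...,H_n) acts componentwise:
       (D_X V)^c = X(V^c) + V^c X(H_c) / H_c.
   (2) An eventual identity E is "separated": its component E^a depends on u^a only.  Writing
       X * Y = X o Y o E^{-1}, the F-manifold identity for * applied to d_i, d_i, d_a, d_a (i ~= a)
       forces d_i (E^{-1})^a = 0, and since E^a (E^{-1})^a = 1 also d_i E^a = 0.
   (3) For a separated field E the first identity is then a componentwise application of the
       Leibniz rule: the extra terms X^c Y^c Z^c d_c E^c are symmetric in X and Y and cancel.
   (4) The second identity holds because all the operators C_X and k C_Y k are diagonal
       (multiplication by a scalar in each component, conjugation twice), hence commute, so
       both commutators vanish.  Neither this nor (3) uses |k_i| = 1, the differentiability of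
       the H_i, or the F-manifold axioms for o itself; only those for the twisted product. *)

section \<open>The Chern connection of a diagonal metric\<close>

lemma matrix_inv_diag_metric:
  fixes Hd :: "complex^'n::finite \<Rightarrow> 'n \<Rightarrow> real"
  assumes "\<forall>i. Hd x i > 0"
  shows "matrix_inv (diag_metric Hd x)
       = (\<chi> a b. if a = b then inverse (complex_of_real (Hd x a)) else 0)"
proof -
  let ?A = "diag_metric Hd x"
  let ?B = "(\<chi> a b. if a = b then inverse (complex_of_real (Hd x a)) else 0) :: complex^'n^'n"
  have nz: "\<And>a. complex_of_real (Hd x a) \<noteq> 0"
    using assms by (metis less_irrefl of_real_eq_0_iff)
  have AB: "?A ** ?B = mat 1" "?B ** ?A = mat 1"
    by (auto simp: vec_eq_iff matrix_matrix_mult_def diag_metric_def mat_def nz right_inverse[OF nz] left_inverse[OF nz]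
        if_distrib[of "\<lambda>z. z * _"] if_distrib[of "\<lambda>z. _ * z"] cong: if_cong)
  have inv: "?A ** matrix_inv ?A = mat 1 \<and> matrix_inv ?A ** ?A = mat 1"
    unfolding matrix_inv_def by (rule someI[of _ ?B]) (use AB in auto)
  have "matrix_inv ?A = matrix_inv ?A ** (?A ** ?B)"
    using AB by simp
  also have "\<dots> = ?B"
    using inv by (simp add: matrix_mul_assoc)
  finally show ?thesis .
qed

lemma dirder_const: "dirder x X (\<lambda>y. c) = 0"
  by (simp add: dirder_def wirt_def)

lemma chern_diag_metric_component:
  fixes Hd :: "complex^'n::finite \<Rightarrow> 'n \<Rightarrow> real"
  assumes "\<forall>i. Hd x i > 0"
  shows "chern (diag_metric Hd) X V x $ c = dirder x X (\<lambda>y. V y $ c)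
     + V x $ c * dirder x X (\<lambda>y. diag_metric Hd y $ c $ c) * inverse (complex_of_real (Hd x c))"
proof -
  let ?d = "\<lambda>a b. dirder x X (\<lambda>y. diag_metric Hd y $ a $ b)"
  let ?i = "inverse (complex_of_real (Hd x c))"
  have off_diag: "a \<noteq> c \<Longrightarrow> ?d a c = 0" for a
    by (simp add: diag_metric_def dirder_const)
  have "(\<Sum>a\<in>UNIV. \<Sum>b\<in>UNIV. V x $ a * ?d a b * matrix_inv (diag_metric Hd x) $ b $ c)
      = (\<Sum>a\<in>UNIV. V x $ a * ?d a c * ?i)"
    unfolding matrix_inv_diag_metric[of Hd x, OF assms]
    by (rule sum.cong) (auto simp: if_distrib[of "\<lambda>z. _ * z"] cong: if_cong)
  also have "\<dots> = (\<Sum>a\<in>UNIV. if a = c then V x $ c * ?d c c * ?i else 0)"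
    by (rule sum.cong) (auto simp: off_diag)
  also have "\<dots> = V x $ c * ?d c c * ?i"
    by simp
  finally show ?thesis
    unfolding chern_def by simp
qed

section \<open>Wirtinger calculus\<close>

lemma has_derivative_component:
  "(f has_derivative D) (at x) \<Longrightarrow> ((\<lambda>y. f y $ i) has_derivative (\<lambda>v. D v $ i)) (at x)"
  by (rule bounded_linear.has_derivative[OF bounded_linear_vec_nth])

lemma differentiable_component:
  "f differentiable at x \<Longrightarrow> (\<lambda>y. f y $ i) differentiable at x"
  unfolding differentiable_def using has_derivative_component by blast

lemma wirt_mult:
  fixes f g :: "complex^'n::finite \<Rightarrow> complex"
  assumes "f differentiable at x" "g differentiable at x"
  shows "wirt j (\<lambda>y. f y * g y) x = f x * wirt j g x + wirt j f x * g x"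
proof -
  have "((\<lambda>y. f y * g y) has_derivative
     (\<lambda>v. f x * frechet_derivative g (at x) v + frechet_derivative f (at x) v * g x)) (at x)"
    using assms by (intro has_derivative_mult) (auto simp: frechet_derivative_works)
  from frechet_derivative_at[OF this, symmetric] show ?thesis
    by (simp add: wirt_def algebra_simps add_divide_distrib diff_divide_distrib)
qed

lemma dirder_mult:
  fixes f g :: "complex^'n::finite \<Rightarrow> complex"
  assumes "f differentiable at x" "g differentiable at x"
  shows "dirder x X (\<lambda>y. f y * g y) = f x * dirder x X g + dirder x X f * g x"
  unfolding dirder_def wirt_mult[OF assms]
  by (simp add: algebra_simps sum.distrib sum_distrib_left sum_distrib_right)

lemma wirt_eq_0_if_derivative_kills_axis:
  fixes f :: "complex^'n::finite \<Rightarrow> complex"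
  assumes "(f has_derivative D) (at x)" "\<And>c v. D (c *s v) = c * D v" "D (axis i 1) = 0"
  shows "wirt i f x = 0"
proof -
  have "axis i \<i> = \<i> *s axis i (1::complex)"
    by (simp add: vec_eq_iff axis_def)
  then show ?thesis
    using assms by (simp add: wirt_def frechet_derivative_at[OF assms(1), symmetric])
qed

section \<open>Eventual identities in canonical coordinates are separated\<close>

definition twist :: "'n::finite vf \<Rightarrow> 'n pmult" where
  "twist Einv = (\<lambda>x v w. cmult x (cmult x v w) (Einv x))"

definition coord :: "'n::finite \<Rightarrow> 'n vf" where
  "coord k = (\<lambda>_. axis k 1)"

lemma twist_component: "twist Einv x v w $ l = v $ l * w $ l * Einv x $ l"
  by (simp add: twist_def cmult_def)

lemma holo_field_coord: "holo_field U (coord k)"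
  unfolding holo_field_def coord_def by (auto intro!: exI[of _ "\<lambda>_. 0"])

lemma holo_fieldE:
  assumes "holo_field U X" "x \<in> U"
  obtains D where "(X has_derivative D) (at x)" "\<And>(c::complex) v. D (c *s v) = c *s D v"
  using assms unfolding holo_field_def by blast

lemma twist_coord_square: "prodf (twist Einv) (coord k) (coord k) y = Einv y $ k *s axis k 1"
  by (simp add: vec_eq_iff prodf_def twist_component coord_def axis_def)

text \<open>The F-manifold identity for \<open>*\<close> with arguments \<open>d_i, d_i, d_a, d_a\<close>
  (\<open>i \<noteq> a\<close>) yields \<open>(E^{-1})^i d_i (E^{-1})^a = 0\<close>.\<close>
lemma twisted_F_mult_kills_cross_derivative:
  fixes Einv E :: "'n::finite vf"
  assumes F: "F_mult U (twist Einv) E" and xU: "x \<in> U" and ia: "i \<noteq> a"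
  obtains D where "((\<lambda>y. Einv y $ a) has_derivative D) (at x)" "Einv x $ i * D (axis i 1) = 0"
proof -
  let ?m = "twist Einv"
  define P where "P k = prodf ?m (coord k) (coord k)" for k
  have closed: "\<And>X Y. holo_field U X \<Longrightarrow> holo_field U Y \<Longrightarrow> holo_field U (prodf ?m X Y)"
    and compat: "\<And>X Y Z W. holo_field U X \<Longrightarrow> holo_field U Y \<Longrightarrow> holo_field U Z \<Longrightarrow>
        holo_field U W \<Longrightarrow> \<forall>x\<in>U. lieD ?m (prodf ?m X Y) Z W x
                 = ?m x (X x) (lieD ?m Y Z W x) + ?m x (Y x) (lieD ?m X Z W x)"
    using F unfolding F_mult_def by blast+
  have hP: "holo_field U (P k)" for k
    unfolding P_def by (intro closed holo_field_coord)
  have P_comp: "P k y $ l = (if l = k then Einv y $ k else 0)" for k y l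
    by (simp add: P_def twist_coord_square axis_def)
  obtain DPi where DPi: "(P i has_derivative DPi) (at x)"
    using holo_fieldE[OF hP xU] by blast
  obtain DPa where DPa: "(P a has_derivative DPa) (at x)" "\<And>(c::complex) v. DPa (c *s v) = c *s DPa v"
    using holo_fieldE[OF hP xU] by blast
  have DPi_a: "DPi v $ a = 0" for v
  proof -
    have "((\<lambda>y. P i y $ a) has_derivative (\<lambda>v. DPi v $ a)) (at x)"
      by (rule has_derivative_component[OF DPi])
    moreover have "(\<lambda>y. P i y $ a) = (\<lambda>y. 0)"
      using ia by (simp add: P_comp)
    ultimately show ?thesis
      using has_derivative_unique[OF _ has_derivative_const] by metis
  qed
  have coord_const: "frechet_derivative (coord k) (at y) = (\<lambda>_. 0)" for k :: 'n and y
    by (simp add: coord_def)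
  note fd = frechet_derivative_at[OF DPi, symmetric] frechet_derivative_at[OF DPa(1), symmetric]
  have P_i_x: "P i x = Einv x $ i *s axis i 1"
    by (simp add: P_def twist_coord_square)
  text \<open>Left-hand side of the identity: only \<open>[P_i, P_a]^a\<close> survives.\<close>
  have "lieD ?m (P i) (coord a) (coord a) x $ a = Einv x $ i * DPa (axis i 1) $ a"
    by (simp add: lieD_def P_def[symmetric] lie_def fd coord_const DPi_a P_i_x DPa(2)
        twist_component)
  text \<open>Right-hand side: both terms are multiplied by \<open>d_i\<close> and have no
    \<open>a\<close>-component.\<close>
  moreover have "lieD ?m (P i) (coord a) (coord a) x $ a = 0"
    using compat[OF holo_field_coord holo_field_coord holo_field_coord holo_field_coord] xU ia
    by (simp add: P_def twist_component coord_def axis_def)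
  ultimately have "Einv x $ i * DPa (axis i 1) $ a = 0"
    by simp
  moreover have "((\<lambda>y. Einv y $ a) has_derivative (\<lambda>v. DPa v $ a)) (at x)"
    using has_derivative_component[OF DPa(1), of a] by (simp add: P_comp)
  ultimately show thesis
    using that by simp
qed

lemma reciprocal_derivative_vanishes:
  fixes f g :: "'a::real_normed_vector \<Rightarrow> complex"
  assumes "open U" "x \<in> U" "\<forall>y\<in>U. f y * g y = 1"
    and f: "(f has_derivative Df) (at x)" and g: "(g has_derivative Dg) (at x)"
    and "Dg v = 0"
  shows "Df v = 0"
proof -
  have "((\<lambda>y. f y * g y) has_derivative (\<lambda>v. 0)) (at x)"
    by (rule has_derivative_transform_within_open[OF has_derivative_const \<open>open U\<close> \<open>x \<in> U\<close>])
      (use assms(3) in auto)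
  then have "(\<lambda>v. f x * Dg v + Df v * g x) = (\<lambda>v. 0)"
    using has_derivative_unique[OF has_derivative_mult[OF f g]] by blast
  moreover have "g x \<noteq> 0"
    using assms(2,3) by force
  ultimately show ?thesis
    using \<open>Dg v = 0\<close> by (metis (no_types, lifting) add_0 mult_eq_0_iff mult_zero_right)
qed

lemma eventual_identity_separated:
  fixes E Einv :: "'n::finite vf"
  assumes "open U" and ev: "eventual_identity U cmult cunit E Einv"
    and xU: "x \<in> U" and ia: "i \<noteq> a"
  shows "wirt i (\<lambda>y. E y $ a) x = 0"
proof -
  have hE: "holo_field U E" and F: "F_mult U (twist Einv) E"
    using ev unfolding eventual_identity_def twist_def by blast+
  have inv: "\<forall>y\<in>U. E y $ k * Einv y $ k = 1" for k
    using ev unfolding eventual_identity_def by (simp add: vec_eq_iff cmult_def cunit_def)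
  obtain D where D: "((\<lambda>y. Einv y $ a) has_derivative D) (at x)" "Einv x $ i * D (axis i 1) = 0"
    by (rule twisted_F_mult_kills_cross_derivative[OF F xU ia])
  have "E x $ i * Einv x $ i = 1"
    using inv xU by blast
  then have "Einv x $ i \<noteq> 0"
    by auto
  with D have D0: "D (axis i 1) = 0"
    by simp
  obtain DE where DE: "(E has_derivative DE) (at x)" "\<And>(c::complex) v. DE (c *s v) = c *s DE v"
    using holo_fieldE[OF hE xU] by blast
  have dEa: "((\<lambda>y. E y $ a) has_derivative (\<lambda>v. DE v $ a)) (at x)"
    by (rule has_derivative_component[OF DE(1)])
  have "DE (axis i 1) $ a = 0"
    by (rule reciprocal_derivative_vanishes[OF \<open>open U\<close> xU inv dEa D(1) D0])
  moreover have "DE (c *s v) $ a = c * DE v $ a" for c v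
    using DE(2) by simp
  ultimately show ?thesis
    by (intro wirt_eq_0_if_derivative_kills_axis[OF dEa])
qed

lemma dirder_eventual_identity:
  fixes E Einv :: "'n::finite vf"
  assumes "open U" "eventual_identity U cmult cunit E Einv" "x \<in> U"
  shows "dirder x X (\<lambda>y. E y $ c) = X x $ c * wirt c (\<lambda>y. E y $ c) x"
proof -
  have "dirder x X (\<lambda>y. E y $ c)
      = (\<Sum>j\<in>UNIV. if j = c then X x $ c * wirt c (\<lambda>y. E y $ c) x else 0)"
    unfolding dirder_def
    by (rule sum.cong) (auto simp: eventual_identity_separated[OF assms])
  then show ?thesis
    by simp
qed

lemma chern_separated_identity:
  fixes Hd :: "complex^'n::finite \<Rightarrow> 'n \<Rightarrow> real" and E X Y Z :: "'n vf"
  assumes Hx: "\<forall>i. Hd x i > 0"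
    and diff: "E differentiable at x" "X differentiable at x" "Y differentiable at x"
      "Z differentiable at x"
    and sep: "\<And>W c. dirder x W (\<lambda>y. E y $ c) = W x $ c * w c"
  shows "chern (diag_metric Hd) X (prodf cmult (prodf cmult E Y) Z) x
       - chern (diag_metric Hd) Y (prodf cmult (prodf cmult E X) Z) x
     = cmult x (E x) (chern (diag_metric Hd) X (prodf cmult Y Z) x
                      - chern (diag_metric Hd) Y (prodf cmult X Z) x)"
proof (subst vec_eq_iff, rule allI)
  fix c
  have leibniz: "dirder x W (\<lambda>y. prodf cmult (prodf cmult E A) B y $ c)
       = E x $ c * dirder x W (\<lambda>y. A y $ c * B y $ c) + W x $ c * w c * (A x $ c * B x $ c)"
    if "A differentiable at x" "B differentiable at x" for W A B :: "'n vf"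
  proof -
    have "(\<lambda>y. prodf cmult (prodf cmult E A) B y $ c) = (\<lambda>y. E y $ c * (A y $ c * B y $ c))"
      by (simp add: prodf_def cmult_def mult.assoc)
    then show ?thesis
      by (simp add: dirder_mult[OF differentiable_component[OF diff(1)]
          differentiable_mult[OF differentiable_component[OF that(1)]
            differentiable_component[OF that(2)]]] sep)
  qed
  show "(chern (diag_metric Hd) X (prodf cmult (prodf cmult E Y) Z) x
       - chern (diag_metric Hd) Y (prodf cmult (prodf cmult E X) Z) x) $ c
     = cmult x (E x) (chern (diag_metric Hd) X (prodf cmult Y Z) x
                      - chern (diag_metric Hd) Y (prodf cmult X Z) x) $ c"
    unfolding cmult_def[of x] vec_lambda_beta vector_minus_component
      chern_diag_metric_component[of Hd x, OF Hx] leibniz[OF diff(3,4)] leibniz[OF diff(2,4)]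
    by (simp add: algebra_simps prodf_def cmult_def)
qed

text \<open>Second identity: \<open>C_X\<close> and \<open>k C_Y k\<close> are diagonal, so they commute.\<close>
lemma commut_diagonal_vanishes:
  "commut (Cop cmult X x) (ktil kd x \<circ> Cop cmult Y x \<circ> ktil kd x) = (\<lambda>v. 0)"
  by (simp add: fun_eq_iff vec_eq_iff commut_def Cop_def cmult_def ktil_def)

theorem mainTheorem18:
  fixes U :: "(complex^'n) set"
    and Hd :: "complex^'n \<Rightarrow> 'n \<Rightarrow> real"
    and kd :: "complex^'n \<Rightarrow> 'n \<Rightarrow> complex"
    and E Einv :: "'n vf"
  assumes U_open: "open U"
    and Fman: "F_mult U cmult cunit"
    and H_pos: "\<forall>x\<in>U. \<forall>i. Hd x i > 0"
    and H_diff: "\<forall>i. (\<lambda>y. Hd y i) differentiable_on U"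
    and k_norm: "\<forall>x\<in>U. \<forall>i. cmod (kd x i) = 1"
    and ev: "eventual_identity U cmult cunit E Einv"
  shows
    "(\<forall>X Y Z :: 'n vf. X differentiable_on U \<longrightarrow> Y differentiable_on U \<longrightarrow> Z differentiable_on U \<longrightarrow>
       (\<forall>x\<in>U.
          chern (diag_metric Hd) X (prodf cmult (prodf cmult E Y) Z) x
          - chern (diag_metric Hd) Y (prodf cmult (prodf cmult E X) Z) x
        = cmult x (E x) (chern (diag_metric Hd) X (prodf cmult Y Z) x
                          - chern (diag_metric Hd) Y (prodf cmult X Z) x)))
   \<and> (\<forall>X Y :: 'n vf. \<forall>x\<in>U.
        commut (Cop cmult X x) (ktil kd x \<circ> Cop cmult Y x \<circ> ktil kd x)
      = commut (Cop cmult (prodf cmult Einv X) x) (ktil kd x \<circ> Cop cmult (prodf cmult Einv Y) x \<circ> ktil kd x))"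
proof (intro conjI allI impI ballI)
  fix X Y Z :: "'n vf" and x
  assume "X differentiable_on U" "Y differentiable_on U" "Z differentiable_on U" and xU: "x \<in> U"
  then have "X differentiable at x" "Y differentiable at x" "Z differentiable at x"
    using U_open differentiable_on_eq_differentiable_at by blast+
  moreover have "E differentiable at x"
    using ev xU unfolding eventual_identity_def differentiable_def by (metis holo_fieldE)
  moreover have "\<forall>i. Hd x i > 0"
    using H_pos xU by blast
  ultimately show "chern (diag_metric Hd) X (prodf cmult (prodf cmult E Y) Z) x
      - chern (diag_metric Hd) Y (prodf cmult (prodf cmult E X) Z) x
    = cmult x (E x) (chern (diag_metric Hd) X (prodf cmult Y Z) x
                     - chern (diag_metric Hd) Y (prodf cmult X Z) x)"
    using chern_separated_identity[where w = "\<lambda>c. wirt c (\<lambda>y. E y $ c) x"]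
      dirder_eventual_identity[OF U_open ev xU] by metis
next
  fix X Y :: "'n vf" and x
  show "commut (Cop cmult X x) (ktil kd x \<circ> Cop cmult Y x \<circ> ktil kd x)
      = commut (Cop cmult (prodf cmult Einv X) x) (ktil kd x \<circ> Cop cmult (prodf cmult Einv Y) x \<circ> ktil kd x)"
    by (simp only: commut_diagonal_vanishes)
qed

end
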